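(* Let $n_1,n_2$ be nonnegative integers, and consider the walks of minimal length from $(0,0)$ to $(n_1,n_2)$ that stay in the first quadrant and use steps from $\{E,W,NE,SW\}$; let $s(n_1,n_2)$ be the number of such shortest walks. (i) If $n_1\ge n_2$, then every shortest walk uses only $E$ and $NE$ steps, the shortest length is $n_1$, and $F(n_1;\,n_1,n_2)=s(n_1,n_2)=\binom{n_1}{n_2}$. (ii) If $n_1\le n_2$, then every shortest walk uses only $W$ and $NE$ steps, the shortest length is $2n_2-n_1$, and $F(2n_2-n_1;\,n_1,n_2)=s(n_1,n_2)=\frac{n_1+1}{2n_2-n_1+1}\binom{2n_2-n_1+1}{n_2+1}$.
   Context: Steps are $E=(1,0)$, $W=(-1,0)$, $NE=(1,1)$, $SW=(-1,-1)$. $F(m;\,n_1,n_2)$ denotes the number of lattice walks from $(0,0)$ to $(n_1,n_2)$ that always stay in the first quadrant $\{(a,b): a\ge 0,\ b\ge 0\}$ and have exactly $m$ steps, each belonging to $\{E,W,NE,SW\}$. *)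

theory Defs
  imports Complex_Main
begin

datatype step = E | W | NE | SW

fun step_vec :: "step \<Rightarrow> int \<times> int" where
  "step_vec E = (1, 0)"
| "step_vec W = (-1, 0)"
| "step_vec NE = (1, 1)"
| "step_vec SW = (-1, -1)"

definition pos :: "step list \<Rightarrow> nat \<Rightarrow> int \<times> int" where
  "pos w k = (\<Sum>s\<leftarrow>take k w. fst (step_vec s), \<Sum>s\<leftarrow>take k w. snd (step_vec s))"

definition quadrant_walk :: "step list \<Rightarrow> nat \<Rightarrow> nat \<Rightarrow> bool" where
  "quadrant_walk w n1 n2 \<longleftrightarrow>
     (\<forall>k\<le>length w. fst (pos w k) \<ge> 0 \<and> snd (pos w k) \<ge> 0) \<and>
     pos w (length w) = (int n1, int n2)"

definition F :: "nat \<Rightarrow> nat \<Rightarrow> nat \<Rightarrow> nat" where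
  "F m n1 n2 = card {w. length w = m \<and> quadrant_walk w n1 n2}"

definition min_len :: "nat \<Rightarrow> nat \<Rightarrow> nat" where
  "min_len n1 n2 = (LEAST m. \<exists>w. length w = m \<and> quadrant_walk w n1 n2)"

definition s :: "nat \<Rightarrow> nat \<Rightarrow> nat" where
  "s n1 n2 = F (min_len n1 n2) n1 n2"

end

theory Submission
  imports Defs
begin

text \<open>
  Counting letters, a walk ending at \<open>(n1, n2)\<close> satisfies
  \<open>length = n1 + 2 (#W + #SW)\<close> and \<open>length + n1 = 2 n2 + 2 (#E + #SW)\<close>.
  So every walk has length at least \<open>n1\<close> and at least \<open>2 n2 - n1\<close>, and a walk of that
  length uses only \<open>E, NE\<close>, respectively only \<open>W, NE\<close>. In the first case the quadrant
  condition is automatic, so we count words of length \<open>n1\<close> with \<open>n2\<close> letters \<open>NE\<close>.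
  In the second case the abscissa of a prefix is \<open>#NE - #W\<close>, so the shortest walks are
  exactly the ballot sequences with \<open>n2\<close> letters \<open>NE\<close> and \<open>n2 - n1\<close> letters \<open>W\<close>,
  counted by \<open>C(N, n2) - C(N, n2 + 1)\<close> with \<open>N = 2 n2 - n1\<close>.
\<close>

lemma length_eq_count_list_two:
  "a \<noteq> b \<Longrightarrow> set w \<subseteq> {a, b} \<Longrightarrow> length w = count_list w a + count_list w b"
  by (induction w) auto

lemma card_two_letter_lists:
  assumes "a \<noteq> b"
  shows "card {w. set w \<subseteq> {a, b} \<and> length w = n \<and> count_list w b = k} = n choose k"
proof (induction n arbitrary: k)
  case 0
  have "{w. set w \<subseteq> {a, b} \<and> length w = 0 \<and> count_list w b = k} = (if k = 0 then {[]} else {})"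
    by auto
  then show ?case by simp
next
  case (Suc n)
  let ?L = "\<lambda>n k. {w. set w \<subseteq> {a, b} \<and> length w = n \<and> count_list w b = k}"
  have split: "?L (Suc n) k = Cons a ` ?L n k \<union> Cons b ` {w \<in> ?L n (k - 1). 0 < k}"
    using assms by (auto simp: length_Suc_conv)
  have finite: "finite {w. set w \<subseteq> {a, b} \<and> length w = n \<and> Q w}" for Q
    by (rule finite_subset[OF _ finite_lists_length_eq[of "{a, b}" n]]) auto
  have "card (?L (Suc n) k) = card (?L n k) + card {w \<in> ?L n (k - 1). 0 < k}"
    unfolding split by (subst card_Un_disjoint) (auto simp: card_image finite assms)
  also have "\<dots> = (n choose k) + (if 0 < k then n choose (k - 1) else 0)"
    using Suc.IH by simp
  also have "\<dots> = Suc n choose k"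
    by (cases k) auto
  finally show ?case .
qed

definition ballot_lists :: "'a \<Rightarrow> 'a \<Rightarrow> nat \<Rightarrow> nat \<Rightarrow> 'a list set" where
  "ballot_lists a b p q =
     {w. set w \<subseteq> {a, b} \<and> count_list w a = p \<and> count_list w b = q \<and>
         (\<forall>k. count_list (take k w) b \<le> count_list (take k w) a)}"

lemma all_take_snoc_iff: "(\<forall>k. P (take k (w @ [x]))) \<longleftrightarrow> (\<forall>k. P (take k w)) \<and> P (w @ [x])"
proof (intro iffI conjI allI)
  fix k assume "\<forall>k. P (take k (w @ [x]))"
  then have "P (take (min k (length w)) (w @ [x]))" ..
  then show "P (take k w)" by (simp add: min_def split: if_splits)
next
  assume "\<forall>k. P (take k (w @ [x]))"
  then show "P (w @ [x])" by (metis take_all order_refl)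
next
  fix k assume "(\<forall>k. P (take k w)) \<and> P (w @ [x])"
  then show "P (take k (w @ [x]))" by (cases "k \<le> length w") auto
qed

lemma ballot_lists_length:
  "a \<noteq> b \<Longrightarrow> w \<in> ballot_lists a b p q \<Longrightarrow> length w = p + q"
  unfolding ballot_lists_def using length_eq_count_list_two by fastforce

lemma finite_ballot_lists:
  assumes "a \<noteq> b"
  shows "finite (ballot_lists a b p q)"
proof (rule finite_subset)
  show "ballot_lists a b p q \<subseteq> {w. set w \<subseteq> {a, b} \<and> length w = p + q}"
  proof
    fix w assume w: "w \<in> ballot_lists a b p q"
    then have "length w = p + q"
      by (rule ballot_lists_length[OF assms])
    with w show "w \<in> {w. set w \<subseteq> {a, b} \<and> length w = p + q}"
      by (simp add: ballot_lists_def)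
  qed
qed (simp add: finite_lists_length_eq)

lemma ballot_lists_eq_empty: "p < q \<Longrightarrow> ballot_lists a b p q = {}"
proof (intro equals0I)
  fix w assume "w \<in> ballot_lists a b p q" "p < q"
  then show False
    unfolding ballot_lists_def by (auto dest!: spec[of _ "length w"])
qed

lemma ballot_lists_0: "a \<noteq> b \<Longrightarrow> ballot_lists a b p 0 = {replicate p a}"
proof (intro set_eqI iffI)
  fix w assume "w \<in> ballot_lists a b p 0"
  then have "\<forall>y\<in>set w. y = a" "count_list w a = p"
    unfolding ballot_lists_def by (auto simp: count_list_0_iff)
  then show "w \<in> {replicate p a}"
    using replicate_length_same[of w a] by (simp add: count_list_eq_length_filter filter_id_conv)
qed (auto simp: ballot_lists_def take_replicate count_list_eq_length_filter)

lemma ballot_lists_Suc_Suc: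
  assumes "a \<noteq> b" "q \<le> p"
  shows "ballot_lists a b (Suc p) (Suc q) =
           (\<lambda>w. w @ [a]) ` ballot_lists a b p (Suc q) \<union> (\<lambda>w. w @ [b]) ` ballot_lists a b (Suc p) q"
proof (intro set_eqI iffI)
  fix w assume w: "w \<in> ballot_lists a b (Suc p) (Suc q)"
  then have "w \<noteq> []" by (auto simp: ballot_lists_def)
  then obtain v x where "w = v @ [x]" by (metis rev_exhaust)
  with w assms(1)
  show "w \<in> (\<lambda>w. w @ [a]) ` ballot_lists a b p (Suc q) \<union> (\<lambda>w. w @ [b]) ` ballot_lists a b (Suc p) q"
    by (auto simp: ballot_lists_def all_take_snoc_iff[where P = "\<lambda>u. count_list u b \<le> count_list u a"]
        simp del: take_append)
next
  fix w assume "w \<in> (\<lambda>w. w @ [a]) ` ballot_lists a b p (Suc q) \<union> (\<lambda>w. w @ [b]) ` ballot_lists a b (Suc p) q"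
  with assms show "w \<in> ballot_lists a b (Suc p) (Suc q)"
    by (elim UnE imageE; simp add: ballot_lists_def
        all_take_snoc_iff[where P = "\<lambda>u. count_list u b \<le> count_list u a"] del: take_append)
qed

text \<open>The reflection-principle count \<open>C(p+q, p) - C(p+q, p+1)\<close>, stated additively to
  avoid truncated subtraction.\<close>
lemma card_ballot_lists:
  assumes "a \<noteq> b" "q \<le> Suc p"
  shows "card (ballot_lists a b p q) + (p + q choose Suc p) = p + q choose p"
  using assms(2)
proof (induction "p + q" arbitrary: p q rule: less_induct)
  case less
  consider "q = 0" | "q = Suc p" | p' q' where "p = Suc p'" "q = Suc q'" "q' \<le> p'"
    using less.prems by (cases p; cases q) (auto simp: le_Suc_eq)
  then show ?case
  proof cases
    case 1
    then show ?thesis using assms(1) by (simp add: ballot_lists_0)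
  next
    case 2
    then show ?thesis
      using binomial_symmetric[of p "p + q"] by (simp add: ballot_lists_eq_empty)
  next
    case 3
    have IH: "card (ballot_lists a b p' (Suc q')) + (p' + Suc q' choose Suc p') = p' + Suc q' choose p'"
             "card (ballot_lists a b (Suc p') q') + (Suc p' + q' choose Suc (Suc p')) = Suc p' + q' choose Suc p'"
      using 3 by (intro less.hyps; simp)+
    have "card (ballot_lists a b p q) =
            card (ballot_lists a b p' (Suc q')) + card (ballot_lists a b (Suc p') q')"
      unfolding 3 ballot_lists_Suc_Suc[OF assms(1) 3(3)]
      by (subst card_Un_disjoint) (auto simp: card_image inj_on_def finite_ballot_lists assms(1))
    with IH show ?thesis
      unfolding 3 by simp \<comment> \<open>Pascal's rule for both binomials\<close>
  qed
qed

lemma sum_list_step_vec_fst: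
  "(\<Sum>s\<leftarrow>v. fst (step_vec s)) =
     int (count_list v E) - int (count_list v W) + int (count_list v NE) - int (count_list v SW)"
proof (induction v)
  case (Cons s v)
  then show ?case by (cases s) auto
qed simp

lemma sum_list_step_vec_snd:
  "(\<Sum>s\<leftarrow>v. snd (step_vec s)) = int (count_list v NE) - int (count_list v SW)"
proof (induction v)
  case (Cons s v)
  then show ?case by (cases s) auto
qed simp

lemma length_eq_step_counts:
  "length v = count_list v E + count_list v W + count_list v NE + count_list v SW"
proof (induction v)
  case (Cons s v)
  then show ?case by (cases s) auto
qed simp

lemma pos_eq_counts:
  "pos w k =
     (int (count_list (take k w) E) - int (count_list (take k w) W)
        + int (count_list (take k w) NE) - int (count_list (take k w) SW),
      int (count_list (take k w) NE) - int (count_list (take k w) SW))"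
  unfolding pos_def sum_list_step_vec_fst sum_list_step_vec_snd ..

lemma quadrant_walk_length:
  assumes "quadrant_walk w n1 n2"
  shows "length w = n1 + 2 * (count_list w W + count_list w SW)"
    and "length w + n1 = 2 * n2 + 2 * (count_list w E + count_list w SW)"
proof -
  from assms have "pos w (length w) = (int n1, int n2)"
    unfolding quadrant_walk_def by blast
  then have "int n1 = int (count_list w E) - int (count_list w W)
                        + int (count_list w NE) - int (count_list w SW)"
    and "int n2 = int (count_list w NE) - int (count_list w SW)"
    unfolding pos_eq_counts by simp_all
  with length_eq_step_counts[of w]
  show "length w = n1 + 2 * (count_list w W + count_list w SW)"
    and "length w + n1 = 2 * n2 + 2 * (count_list w E + count_list w SW)"
    by simp_all
qed

lemma pos_E_NE:
  assumes "set w \<subseteq> {E, NE}"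
  shows "pos w k = (int (min k (length w)), int (count_list (take k w) NE))"
proof -
  have "set (take k w) \<subseteq> {E, NE}"
    using assms set_take_subset by fastforce
  then have "W \<notin> set (take k w)" "SW \<notin> set (take k w)"
    and "min k (length w) = count_list (take k w) E + count_list (take k w) NE"
    using length_eq_count_list_two[of E NE "take k w"] by auto
  then show ?thesis
    by (simp add: pos_eq_counts)
qed

lemma pos_W_NE:
  assumes "set w \<subseteq> {W, NE}"
  shows "pos w k =
           (int (count_list (take k w) NE) - int (count_list (take k w) W), int (count_list (take k w) NE))"
proof -
  have "set (take k w) \<subseteq> {W, NE}"
    using assms set_take_subset by fastforce
  then have "E \<notin> set (take k w)" "SW \<notin> set (take k w)"
    by auto
  then show ?thesis
    by (simp add: pos_eq_counts)
qed

lemma set_subset_if_count_list_0: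
  "(\<And>x. x \<notin> A \<Longrightarrow> count_list w x = 0) \<Longrightarrow> set w \<subseteq> A"
  by (auto simp: count_list_0_iff)

lemma quadrant_walks_E_NE:
  assumes "n2 \<le> n1"
  shows "{w. length w = n1 \<and> quadrant_walk w n1 n2} =
           {w. set w \<subseteq> {E, NE} \<and> length w = n1 \<and> count_list w NE = n2}"
proof (intro set_eqI iffI)
  fix w assume "w \<in> {w. length w = n1 \<and> quadrant_walk w n1 n2}"
  then have walk: "quadrant_walk w n1 n2" and len: "length w = n1" by auto
  then have "count_list w W = 0" "count_list w SW = 0"
    using quadrant_walk_length(1)[OF walk] by simp_all
  then have letters: "set w \<subseteq> {E, NE}"
    by (intro set_subset_if_count_list_0) (metis insertCI step.exhaust)
  have "pos w (length w) = (int n1, int n2)"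
    using walk unfolding quadrant_walk_def by blast
  with letters len show "w \<in> {w. set w \<subseteq> {E, NE} \<and> length w = n1 \<and> count_list w NE = n2}"
    by (simp add: pos_E_NE)
next
  fix w assume "w \<in> {w. set w \<subseteq> {E, NE} \<and> length w = n1 \<and> count_list w NE = n2}"
  then show "w \<in> {w. length w = n1 \<and> quadrant_walk w n1 n2}"
    by (simp add: quadrant_walk_def pos_E_NE)
qed

lemma quadrant_walks_W_NE:
  assumes "n1 \<le> n2"
  shows "{w. length w = 2 * n2 - n1 \<and> quadrant_walk w n1 n2} = ballot_lists NE W n2 (n2 - n1)"
proof (intro set_eqI iffI)
  fix w assume "w \<in> {w. length w = 2 * n2 - n1 \<and> quadrant_walk w n1 n2}"
  then have walk: "quadrant_walk w n1 n2" and "length w = 2 * n2 - n1" by auto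
  then have "count_list w E = 0" "count_list w SW = 0"
    using quadrant_walk_length(2)[OF walk] assms by simp_all
  then have letters: "set w \<subseteq> {W, NE}"
    by (intro set_subset_if_count_list_0) (metis insertCI step.exhaust)
  have "\<forall>k\<le>length w. count_list (take k w) W \<le> count_list (take k w) NE"
    using walk letters unfolding quadrant_walk_def by (simp add: pos_W_NE)
  then have "\<forall>k. count_list (take k w) W \<le> count_list (take k w) NE"
    by (metis nat_le_linear take_all)
  moreover have "pos w (length w) = (int n1, int n2)"
    using walk unfolding quadrant_walk_def by blast
  ultimately show "w \<in> ballot_lists NE W n2 (n2 - n1)"
    using letters unfolding ballot_lists_def by (auto simp: pos_W_NE)
next
  fix w assume w: "w \<in> ballot_lists NE W n2 (n2 - n1)"
  then have letters: "set w \<subseteq> {W, NE}" and "count_list w NE = n2" "count_list w W = n2 - n1"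
    and "\<forall>k. count_list (take k w) W \<le> count_list (take k w) NE"
    unfolding ballot_lists_def by auto
  moreover have "length w = 2 * n2 - n1"
    using ballot_lists_length[OF _ w] assms by simp
  ultimately show "w \<in> {w. length w = 2 * n2 - n1 \<and> quadrant_walk w n1 n2}"
    using assms unfolding quadrant_walk_def by (simp add: pos_W_NE)
qed

lemma min_len_eqI:
  assumes "\<And>w. quadrant_walk w n1 n2 \<Longrightarrow> m \<le> length w" and "F m n1 n2 \<noteq> 0"
  shows "min_len n1 n2 = m"
proof -
  from assms(2) have "{w. length w = m \<and> quadrant_walk w n1 n2} \<noteq> {}"
    unfolding F_def by (metis card.empty)
  then have "\<exists>w. length w = m \<and> quadrant_walk w n1 n2"
    by blast
  then show ?thesis
    unfolding min_len_def by (rule Least_equality) (use assms(1) in blast)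
qed

lemma binomial_diff_binomial_Suc:
  assumes "k \<le> n"
  shows "real (n choose k) - real (n choose Suc k) =
           (2 * real k + 1 - real n) / (real n + 1) * real (Suc n choose Suc k)"
proof -
  have "Suc k * (n choose Suc k) = (n - k) * (n choose k)"
    using binomial_absorption[of k n] binomial_absorb_comp[of n k] by simp
  then have Suc_k: "(real k + 1) * real (n choose Suc k) = (real n - real k) * real (n choose k)"
    using assms by (metis of_nat_Suc of_nat_diff of_nat_mult add.commute)
  have "Suc k * (Suc n choose Suc k) = Suc n * (n choose k)"
    by (rule Suc_times_binomial)
  then have Suc_n: "(real k + 1) * real (Suc n choose Suc k) = (real n + 1) * real (n choose k)"
    by (metis of_nat_Suc of_nat_mult add.commute)
  have "(real k + 1) * ((real n + 1) * (real (n choose k) - real (n choose Suc k))) =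
          (real k + 1) * ((2 * real k + 1 - real n) * real (Suc n choose Suc k))"
    using Suc_k Suc_n by algebra
  then have "(real n + 1) * (real (n choose k) - real (n choose Suc k)) =
               (2 * real k + 1 - real n) * real (Suc n choose Suc k)"
    by (simp add: add_nonneg_eq_0_iff)
  then show ?thesis
    by (simp add: field_simps)
qed

lemma F_E_NE:
  assumes "n2 \<le> n1"
  shows "F n1 n1 n2 = n1 choose n2"
  unfolding F_def quadrant_walks_E_NE[OF assms] by (simp add: card_two_letter_lists)

lemma min_len_E_NE:
  assumes "n2 \<le> n1"
  shows "min_len n1 n2 = n1"
proof (rule min_len_eqI)
  show "n1 \<le> length w" if "quadrant_walk w n1 n2" for w
    using quadrant_walk_length(1)[OF that] by simp
  show "F n1 n1 n2 \<noteq> 0"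
    using assms by (simp add: F_E_NE)
qed

lemma F_W_NE:
  assumes "n1 \<le> n2"
  shows "real (F (2 * n2 - n1) n1 n2) =
           (real n1 + 1) / (real (2 * n2 - n1) + 1) * real ((2 * n2 - n1 + 1) choose (n2 + 1))"
proof -
  define N where "N = 2 * n2 - n1"
  have "n2 + (n2 - n1) = N" "n2 \<le> N"
    using assms unfolding N_def by simp_all
  then have "card (ballot_lists NE W n2 (n2 - n1)) + (N choose Suc n2) = N choose n2"
    using card_ballot_lists[of NE W "n2 - n1" n2] by simp
  then have "real (F N n1 n2) = real (N choose n2) - real (N choose Suc n2)"
    unfolding F_def quadrant_walks_W_NE[OF assms, folded N_def]
    by (metis add_diff_cancel_right' of_nat_add)
  also have "\<dots> = (real n1 + 1) / (real N + 1) * real (Suc N choose Suc n2)"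
  proof -
    have "2 * real n2 + 1 - real N = real n1 + 1"
      using assms unfolding N_def by (simp add: of_nat_diff)
    then show ?thesis
      using binomial_diff_binomial_Suc[OF \<open>n2 \<le> N\<close>] by metis
  qed
  finally show ?thesis
    unfolding N_def by simp
qed

lemma min_len_W_NE:
  assumes "n1 \<le> n2"
  shows "min_len n1 n2 = 2 * n2 - n1"
proof (rule min_len_eqI)
  show "2 * n2 - n1 \<le> length w" if "quadrant_walk w n1 n2" for w
    using quadrant_walk_length(2)[OF that] by simp
  have "0 < (real n1 + 1) / (real (2 * n2 - n1) + 1) * real ((2 * n2 - n1 + 1) choose (n2 + 1))"
    using assms by (intro mult_pos_pos divide_pos_pos) (auto simp del: binomial_Suc_Suc)
  then show "F (2 * n2 - n1) n1 n2 \<noteq> 0"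
    using F_W_NE[OF assms] by linarith
qed

theorem theorem2:
  fixes n1 n2 :: nat
  shows "(n1 \<ge> n2 \<longrightarrow>
            min_len n1 n2 = n1 \<and>
            (\<forall>w. quadrant_walk w n1 n2 \<and> length w = min_len n1 n2 \<longrightarrow> set w \<subseteq> {E, NE}) \<and>
            F n1 n1 n2 = s n1 n2 \<and> s n1 n2 = n1 choose n2)
       \<and> (n1 \<le> n2 \<longrightarrow>
            min_len n1 n2 = 2 * n2 - n1 \<and>
            (\<forall>w. quadrant_walk w n1 n2 \<and> length w = min_len n1 n2 \<longrightarrow> set w \<subseteq> {W, NE}) \<and>
            F (2 * n2 - n1) n1 n2 = s n1 n2 \<and>
            real (s n1 n2) = (real n1 + 1) / (real (2 * n2 - n1) + 1) * real ((2 * n2 - n1 + 1) choose (n2 + 1)))"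
proof (intro conjI impI)
  assume "n2 \<le> n1"
  then show min: "min_len n1 n2 = n1"
    by (rule min_len_E_NE)
  show "\<forall>w. quadrant_walk w n1 n2 \<and> length w = min_len n1 n2 \<longrightarrow> set w \<subseteq> {E, NE}"
    using quadrant_walks_E_NE[OF \<open>n2 \<le> n1\<close>] min by auto
  show "F n1 n1 n2 = s n1 n2" "s n1 n2 = n1 choose n2"
    unfolding s_def min using F_E_NE[OF \<open>n2 \<le> n1\<close>] by simp_all
next
  assume "n1 \<le> n2"
  then show min: "min_len n1 n2 = 2 * n2 - n1"
    by (rule min_len_W_NE)
  show "\<forall>w. quadrant_walk w n1 n2 \<and> length w = min_len n1 n2 \<longrightarrow> set w \<subseteq> {W, NE}"
    using quadrant_walks_W_NE[OF \<open>n1 \<le> n2\<close>] min by (auto simp: ballot_lists_def)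
  show "F (2 * n2 - n1) n1 n2 = s n1 n2"
    unfolding s_def min ..
  then show "real (s n1 n2) = (real n1 + 1) / (real (2 * n2 - n1) + 1) * real ((2 * n2 - n1 + 1) choose (n2 + 1))"
    using F_W_NE[OF \<open>n1 \<le> n2\<close>] by simp
qed

end
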